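(* Let $\mathcal D$ be universal and let $m\in\mathcal D$ with $m>0$. Suppose the set $S=\{r\in\mathcal D: r^{+}>m+r\}$ is nonempty. Then $s:=\min S$ is a jump number, i.e. $s^{+}>2s$.
   Context: $\mathcal D$ denotes a finite subset of $\mathbb R_{\ge0}$ with $0\in\mathcal D$; it is universal if there is a countable homogeneous metric space with distance set exactly $\mathcal D$ into which every finite metric space with distances in $\mathcal D$ embeds isometrically (homogeneous: every isometry between finite subspaces extends to an isometry of the space onto itself). For $r\in\mathcal D$ with $r<\max\mathcal D$, $r^{+}$ is the smallest element of $\mathcal D$ larger than $r$; for $r=\max\mathcal D$, $r^{+}=r$. *)

theory Defs
  imports Complex_Main "HOL-Library.Countable_Set"
begin

text \<open>Carriers live in type nat: every countable (in particular every finite) metric space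
  is isometric to one whose carrier is a subset of nat.\<close>

definition metric_on :: "'a set \<Rightarrow> ('a \<Rightarrow> 'a \<Rightarrow> real) \<Rightarrow> bool" where
  "metric_on X d \<longleftrightarrow>
     (\<forall>x\<in>X. \<forall>y\<in>X. 0 \<le> d x y \<and> (d x y = 0 \<longleftrightarrow> x = y) \<and> d x y = d y x) \<and>
     (\<forall>x\<in>X. \<forall>y\<in>X. \<forall>z\<in>X. d x z \<le> d x y + d y z)"

definition dist_set :: "'a set \<Rightarrow> ('a \<Rightarrow> 'a \<Rightarrow> real) \<Rightarrow> real set" where
  "dist_set X d = {d x y | x y. x \<in> X \<and> y \<in> X}"

definition homogeneous_on :: "'a set \<Rightarrow> ('a \<Rightarrow> 'a \<Rightarrow> real) \<Rightarrow> bool" where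
  "homogeneous_on X d \<longleftrightarrow>
     (\<forall>A f. finite A \<and> A \<subseteq> X \<and> inj_on f A \<and> f ` A \<subseteq> X \<and>
            (\<forall>x\<in>A. \<forall>y\<in>A. d (f x) (f y) = d x y) \<longrightarrow>
        (\<exists>g. bij_betw g X X \<and> (\<forall>x\<in>X. \<forall>y\<in>X. d (g x) (g y) = d x y) \<and>
             (\<forall>x\<in>A. g x = f x)))"

definition universal_dset :: "real set \<Rightarrow> bool" where
  "universal_dset D \<longleftrightarrow>
     finite D \<and> 0 \<in> D \<and> (\<forall>r\<in>D. 0 \<le> r) \<and>
     (\<exists>(X :: nat set) d. countable X \<and> metric_on X d \<and> dist_set X d = D \<and> homogeneous_on X d \<and>
        (\<forall>(F :: nat set) e. finite F \<and> metric_on F e \<and> dist_set F e \<subseteq> D \<longrightarrow>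
           (\<exists>f. inj_on f F \<and> f ` F \<subseteq> X \<and> (\<forall>x\<in>F. \<forall>y\<in>F. d (f x) (f y) = e x y))))"

text \<open>r^+ : the next element of D above r, or r itself if r is the maximum.\<close>
definition dsucc :: "real set \<Rightarrow> real \<Rightarrow> real" where
  "dsucc D r = (if r < Max D then Min {x \<in> D. r < x} else r)"

end

theory Submission
  imports Defs
begin

text \<open>Let s be the least element of D with s^+ > m + s and suppose,
  for contradiction, that s^+ \<le> 2s.  Put t = s^+ - s, so m < t \<le> s; let u be the
  least distance \<ge> t and p the largest distance < t.  Then p^+ = u and p < s, so by
  minimality of s we get u \<le> m + p.  Hence both (u, s, s^+) and (u, p, m) are
  triangles with sides in D.  In the universal homogeneous space both triangles
  are realised, and homogeneity lets us glue them along their common side u; the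
  distance v between the two apexes lies in D and satisfies s^+ - m \<le> v \<le> s + p.
  As s^+ - m > s, the gap above s forces v \<ge> s^+, while s + p < s + t = s^+.\<close>

definition universal_space :: "real set \<Rightarrow> nat set \<Rightarrow> (nat \<Rightarrow> nat \<Rightarrow> real) \<Rightarrow> bool" where
  "universal_space D X d \<longleftrightarrow>
     metric_on X d \<and> dist_set X d = D \<and> homogeneous_on X d \<and>
     (\<forall>(F :: nat set) e. finite F \<and> metric_on F e \<and> dist_set F e \<subseteq> D \<longrightarrow>
        (\<exists>f. inj_on f F \<and> f ` F \<subseteq> X \<and> (\<forall>x\<in>F. \<forall>y\<in>F. d (f x) (f y) = e x y)))"

lemma universal_dsetE:
  assumes "universal_dset D"
  obtains X d where "universal_space D X d"
proof -
  have "\<exists>(X :: nat set) d. countable X \<and> universal_space D X d"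
    using assms unfolding universal_dset_def universal_space_def by (elim conjE)
  then show thesis using that by (elim exE conjE)
qed

lemma universal_space_embeds:
  fixes F :: "nat set"
  assumes "universal_space D X d" "finite F" "metric_on F e" "dist_set F e \<subseteq> D"
  shows "\<exists>f. inj_on f F \<and> f ` F \<subseteq> X \<and> (\<forall>x\<in>F. \<forall>y\<in>F. d (f x) (f y) = e x y)"
proof -
  have embed: "\<forall>(F :: nat set) e. finite F \<and> metric_on F e \<and> dist_set F e \<subseteq> D \<longrightarrow>
      (\<exists>f. inj_on f F \<and> f ` F \<subseteq> X \<and> (\<forall>x\<in>F. \<forall>y\<in>F. d (f x) (f y) = e x y))"
    using assms(1) unfolding universal_space_def by (elim conjE)
  have "finite F \<and> metric_on F e \<and> dist_set F e \<subseteq> D" using assms(2-4) by simp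
  then show ?thesis by (rule mp[OF spec[OF spec[OF embed, of F], of e]])
qed

lemma universal_space_metric:
  assumes "universal_space D X d" and "x \<in> X" "y \<in> X"
  shows "d x x = 0" and "d x y = d y x" and "d x y = 0 \<longleftrightarrow> x = y"
  using assms unfolding universal_space_def metric_on_def by simp_all

lemma universal_space_triangle_ineq:
  assumes "universal_space D X d" and "x \<in> X" "y \<in> X" "z \<in> X"
  shows "d x z \<le> d x y + d y z"
  using assms unfolding universal_space_def metric_on_def by simp

text \<open>The three-point metric space {0,1,2} with side lengths
  d(0,1) = u, d(0,2) = a, d(1,2) = b.\<close>

definition tri :: "real \<Rightarrow> real \<Rightarrow> real \<Rightarrow> nat \<Rightarrow> nat \<Rightarrow> real" where
  "tri u a b x y = (if x = y then 0 else if x + y = 1 then u else if x + y = 2 then a else b)"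

lemma tri_metric:
  assumes "0 < u" "0 < a" "0 < b" "u \<le> a + b" "a \<le> u + b" "b \<le> u + a"
  shows "metric_on {0::nat, 1, 2} (tri u a b)"
  using assms unfolding metric_on_def tri_def by auto

lemma tri_dist_set: "dist_set {0::nat, 1, 2} (tri u a b) \<subseteq> {0, u, a, b}"
  unfolding dist_set_def tri_def by auto

lemma universal_space_triangle:
  assumes U: "universal_space D X d" and "0 \<in> D" "u \<in> D" "a \<in> D" "b \<in> D"
    and "0 < u" "0 < a" "0 < b" "u \<le> a + b" "a \<le> u + b" "b \<le> u + a"
  shows "\<exists>x\<in>X. \<exists>y\<in>X. \<exists>z\<in>X. x \<noteq> y \<and> d x y = u \<and> d z x = a \<and> d z y = b"
proof -
  have "dist_set {0::nat, 1, 2} (tri u a b) \<subseteq> D"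
    using tri_dist_set[of u a b] assms(2-5) by blast
  then obtain f where f: "inj_on f {0::nat, 1, 2}" "f ` {0, 1, 2} \<subseteq> X"
      "\<forall>x\<in>{0, 1, 2}. \<forall>y\<in>{0, 1, 2}. d (f x) (f y) = tri u a b x y"
    using universal_space_embeds[OF U _ tri_metric[OF assms(6-11)]] by blast
  have "f 0 \<noteq> f 1" using f(1) by (auto dest: inj_onD)
  moreover have "d (f 0) (f 1) = u" "d (f 2) (f 0) = a" "d (f 2) (f 1) = b"
    using f(3) by (auto simp: tri_def)
  moreover have "f 0 \<in> X" "f 1 \<in> X" "f 2 \<in> X" using f(2) by auto
  ultimately show ?thesis by blast
qed

lemma universal_space_edge_transfer:
  assumes U: "universal_space D X d"
    and X: "x \<in> X" "y \<in> X" "x' \<in> X" "y' \<in> X" and "x \<noteq> y" and len: "d x' y' = d x y"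
  shows "\<exists>g. g ` X \<subseteq> X \<and> (\<forall>a\<in>X. \<forall>b\<in>X. d (g a) (g b) = d a b) \<and> g x = x' \<and> g y = y'"
proof -
  define f where "f = (\<lambda>z. if z = x then x' else y')"
  have "d x y \<noteq> 0" using universal_space_metric(3)[OF U X(1,2)] \<open>x \<noteq> y\<close> by simp
  then have "x' \<noteq> y'" using len universal_space_metric(1)[OF U X(3,3)] by auto
  then have "inj_on f {x, y}" unfolding f_def inj_on_def by auto
  moreover have "\<forall>a\<in>{x, y}. \<forall>b\<in>{x, y}. d (f a) (f b) = d a b"
    using len \<open>x \<noteq> y\<close> universal_space_metric(1)[OF U X(1,1)]
      universal_space_metric(1)[OF U X(2,2)] universal_space_metric(1)[OF U X(3,3)]
      universal_space_metric(1)[OF U X(4,4)] universal_space_metric(2)[OF U X(1,2)]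
      universal_space_metric(2)[OF U X(3,4)]
    unfolding f_def by auto
  ultimately have hyp: "finite {x, y} \<and> {x, y} \<subseteq> X \<and> inj_on f {x, y} \<and> f ` {x, y} \<subseteq> X \<and>
      (\<forall>a\<in>{x, y}. \<forall>b\<in>{x, y}. d (f a) (f b) = d a b)"
    using X unfolding f_def by auto
  have "homogeneous_on X d" using U unfolding universal_space_def by simp
  then obtain g where g: "bij_betw g X X" "\<forall>a\<in>X. \<forall>b\<in>X. d (g a) (g b) = d a b"
      "\<forall>z\<in>{x, y}. g z = f z"
    unfolding homogeneous_on_def using hyp by (elim allE[of _ "{x, y}"] allE[of _ f] impE) auto
  have "g x = x'" "g y = y'" using g(3) \<open>x \<noteq> y\<close> unfolding f_def by auto
  moreover have "g ` X \<subseteq> X" using g(1) unfolding bij_betw_def by simp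
  ultimately show ?thesis using g(2) by blast
qed

text \<open>Amalgamation of two triangles (u, a, b) and (u, c, e) along the common side u:
  the distance between the two apexes is a member of D lying in [b - e, a + c].\<close>

lemma universal_space_amalgamation:
  assumes U: "universal_space D X d" and "0 \<in> D"
    and D: "u \<in> D" "a \<in> D" "b \<in> D" "c \<in> D" "e \<in> D"
    and pos: "0 < u" "0 < a" "0 < b" "0 < c" "0 < e"
    and tri1: "u \<le> a + b" "a \<le> u + b" "b \<le> u + a"
    and tri2: "u \<le> c + e" "c \<le> u + e" "e \<le> u + c"
  shows "\<exists>v\<in>D. b - e \<le> v \<and> v \<le> a + c"
proof -
  obtain x1 y1 z1 where P1: "x1 \<in> X" "y1 \<in> X" "z1 \<in> X" "x1 \<noteq> y1"
      and d1: "d x1 y1 = u" "d z1 x1 = a" "d z1 y1 = b"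
    using universal_space_triangle[OF U \<open>0 \<in> D\<close> D(1-3) pos(1-3) tri1] by blast
  obtain x2 y2 z2 where P2: "x2 \<in> X" "y2 \<in> X" "z2 \<in> X" "x2 \<noteq> y2"
      and d2: "d x2 y2 = u" "d z2 x2 = c" "d z2 y2 = e"
    using universal_space_triangle[OF U \<open>0 \<in> D\<close> D(1,4,5) pos(1,4,5) tri2] by blast
  obtain g where g: "g ` X \<subseteq> X" "\<forall>p\<in>X. \<forall>q\<in>X. d (g p) (g q) = d p q"
      "g x2 = x1" "g y2 = y1"
    using universal_space_edge_transfer[OF U P2(1,2) P1(1,2) P2(4) trans[OF d1(1) d2(1)[symmetric]]]
    by blast
  define w where "w = g z2"
  have w: "w \<in> X" using g(1) P2(3) unfolding w_def by blast
  have "d w x1 = c" "d w y1 = e"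
    unfolding w_def g(3,4)[symmetric] using g(2) P2 d2 by simp_all
  then have "d x1 w = c" using universal_space_metric(2)[OF U P1(1) w] by simp
  have vD: "d z1 w \<in> D"
    using U P1(3) w unfolding universal_space_def dist_set_def by auto
  have "d z1 w \<le> a + c"
    using universal_space_triangle_ineq[OF U P1(3) P1(1) w] d1(2) \<open>d x1 w = c\<close> by simp
  moreover have "b - e \<le> d z1 w"
    using universal_space_triangle_ineq[OF U P1(3) w P1(2)] d1(3) \<open>d w y1 = e\<close> by simp
  ultimately show ?thesis using vD by blast
qed

lemma dsucc_props:
  assumes "finite D" "r \<in> D" "r < Max D"
  shows "dsucc D r \<in> D" and "r < dsucc D r" and "\<And>x. x \<in> D \<Longrightarrow> r < x \<Longrightarrow> dsucc D r \<le> x"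
proof -
  have "Max D \<in> D" using assms(1,2) Max_in by blast
  then have ne: "{x \<in> D. r < x} \<noteq> {}" using assms(3) by blast
  have eq: "dsucc D r = Min {x \<in> D. r < x}" using assms(3) unfolding dsucc_def by simp
  show "dsucc D r \<in> D" "r < dsucc D r"
    using Min_in[OF _ ne] assms(1) unfolding eq by auto
  show "\<And>x. x \<in> D \<Longrightarrow> r < x \<Longrightarrow> dsucc D r \<le> x"
    using assms(1) unfolding eq by auto
qed

lemma dsucc_eqI:
  assumes "finite D" "p \<in> D" "u \<in> D" "p < u" and gap: "\<And>x. x \<in> D \<Longrightarrow> p < x \<Longrightarrow> u \<le> x"
  shows "dsucc D p = u"
proof -
  have "p < Max D" using Max_ge[OF assms(1,3)] assms(4) by linarith
  then show ?thesis
    using dsucc_props[OF assms(1,2)] assms by (meson antisym)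
qed

lemma jump_of_least_large_gap:
  assumes U: "universal_dset D" and "m \<in> D" "0 < m" "s \<in> D"
    and big_gap: "m + s < dsucc D s"
    and small_gaps: "\<And>r. r \<in> D \<Longrightarrow> r < s \<Longrightarrow> dsucc D r \<le> m + r"
  shows "2 * s < dsucc D s"
proof (rule ccontr)
  assume "\<not> 2 * s < dsucc D s"
  have fin: "finite D" and "0 \<in> D" and nonneg: "\<And>r. r \<in> D \<Longrightarrow> 0 \<le> r"
    using U unfolding universal_dset_def by auto
  define sp where "sp = dsucc D s"
  have "s < Max D" using big_gap \<open>0 < m\<close> unfolding dsucc_def by (auto split: if_splits)
  note sp = dsucc_props[OF fin \<open>s \<in> D\<close> this, folded sp_def]
  define t where "t = sp - s"
  have "m < t" "t \<le> s" using big_gap \<open>\<not> 2 * s < dsucc D s\<close> unfolding t_def sp_def by auto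
  define u where "u = Min {x \<in> D. t \<le> x}"
  define p where "p = Max {x \<in> D. x < t}"
  have "u \<in> {x \<in> D. t \<le> x}"
    unfolding u_def using \<open>s \<in> D\<close> \<open>t \<le> s\<close> fin by (intro Min_in) auto
  then have u: "u \<in> D" "t \<le> u" "\<And>x. x \<in> D \<Longrightarrow> t \<le> x \<Longrightarrow> u \<le> x"
    using fin unfolding u_def by auto
  have "p \<in> {x \<in> D. x < t}"
    unfolding p_def using \<open>0 \<in> D\<close> \<open>m < t\<close> \<open>0 < m\<close> fin by (intro Max_in) auto
  then have p: "p \<in> D" "p < t" "\<And>x. x \<in> D \<Longrightarrow> x < t \<Longrightarrow> x \<le> p"
    using fin unfolding p_def by auto
  txt \<open>p and u straddle t, so u is the successor of p; minimality of s bounds its gap.\<close>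
  have "dsucc D p = u"
  proof (rule dsucc_eqI[OF fin p(1) u(1)])
    show "p < u" using p(2) u(2) by linarith
    show "u \<le> x" if "x \<in> D" "p < x" for x
      using p(3)[OF that(1)] u(3)[OF that(1)] that(2) by linarith
  qed
  then have "u \<le> m + p" using small_gaps[OF p(1)] p(2) \<open>t \<le> s\<close> by simp
  then have "0 < p" using nonneg[OF p(1)] \<open>m < t\<close> u(2) by linarith
  have "0 < s" using \<open>0 < p\<close> p(2) \<open>t \<le> s\<close> by linarith
  have "u \<le> s" using u(3)[OF \<open>s \<in> D\<close> \<open>t \<le> s\<close>] .
  txt \<open>Glue the triangles (u, s, s^+) and (u, p, m) along the side u.\<close>
  obtain X dX where X: "universal_space D X dX" using universal_dsetE[OF U] by blast
  have "\<exists>v\<in>D. sp - m \<le> v \<and> v \<le> s + p"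
    by (rule universal_space_amalgamation[OF X \<open>0 \<in> D\<close> u(1) \<open>s \<in> D\<close>
          sp(1) p(1) \<open>m \<in> D\<close>])
      (use u(2) \<open>m < t\<close> \<open>0 < m\<close> \<open>0 < s\<close> \<open>0 < p\<close> sp(2) \<open>u \<le> m + p\<close> p(2) \<open>u \<le> s\<close>
        in \<open>auto simp: t_def\<close>)
  then obtain v where v: "v \<in> D" "sp - m \<le> v" "v \<le> s + p" by blast
  have "sp \<le> v" using sp(3)[OF v(1)] v(2) big_gap unfolding sp_def by linarith
  then show False using v(3) p(2) unfolding t_def by linarith
qed

theorem lemma3p1:
  fixes D :: "real set" and m :: real
  assumes "universal_dset D"
    and "m \<in> D" and "m > 0"
    and "{r \<in> D. dsucc D r > m + r} \<noteq> {}"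
  shows "dsucc D (Min {r \<in> D. dsucc D r > m + r}) > 2 * Min {r \<in> D. dsucc D r > m + r}"
proof -
  define S where "S = {r \<in> D. dsucc D r > m + r}"
  have "finite S" using assms(1) unfolding universal_dset_def S_def by auto
  then have "Min S \<in> S" and least: "\<And>r. r \<in> S \<Longrightarrow> Min S \<le> r"
    using Min_in assms(4) unfolding S_def by auto
  have "2 * Min S < dsucc D (Min S)"
  proof (rule jump_of_least_large_gap[OF assms(1-3)])
    show "Min S \<in> D" "m + Min S < dsucc D (Min S)" using \<open>Min S \<in> S\<close> unfolding S_def by auto
    show "\<And>r. r \<in> D \<Longrightarrow> r < Min S \<Longrightarrow> dsucc D r \<le> m + r"
      using least unfolding S_def by force
  qed
  then show ?thesis unfolding S_def by simp
qed

end
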